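(* $\mathfrak{ss}_c^{ui}=\mathfrak d$ and $(\mathfrak{ss}_c^{ui})^\perp=\mathfrak b$.
   Context: Let $\mathfrak S$ be the set of all sequences $\mathbf a=\langle a_i:i\in\omega\rangle$ of rational numbers with $a_i\to0$. For infinite $X\subseteq\omega$ with increasing enumeration $\langle i_n\rangle$, $\sum_X\mathbf a$ denotes $\sum_n a_{i_n}$; $[\omega]^\omega_\omega$ is the set of infinite coinfinite subsets of $\omega$. A series tends to infinity if its partial sums tend to $+\infty$ or to $-\infty$; it is conditional if the sum of its positive terms is $+\infty$ and the sum of its negative terms is $-\infty$; it tends unconditionally to infinity if it tends to infinity and is not conditional. Let $\mathfrak S_{ui}$ be the set of $\mathbf a\in\mathfrak S$ with $\sum\mathbf a$ tending unconditionally to infinity. $\mathfrak{ss}_c^{ui}$ is the least cardinality of $\mathcal X\subseteq[\omega]^\omega_\omega$ such that every $\mathbf a\in\mathfrak S_{ui}$ has some $X\in\mathcal X$ with $\sum_X\mathbf a$ convergent (to a real number); $(\mathfrak{ss}_c^{ui})^\perp$ is the least cardinality of $\mathcal A\subseteq\mathfrak S_{ui}$ such that no $X\in[\omega]^\omega_\omega$ makes $\sum_X\mathbf a$ convergent for all $\mathbf a\in\mathcal A$. $\mathfrak b$, $\mathfrak d$ are the bounding and dominating numbers. *)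

theory Defs
  imports "HOL-Analysis.Analysis" "HOL-Library.Infinite_Set"
begin

definition null_seqs :: "(nat \<Rightarrow> rat) set" where
  "null_seqs = {a. (\<lambda>i. real_of_rat (a i)) \<longlonglongrightarrow> 0}"

definition infcoinf :: "nat set set" where
  "infcoinf = {X. infinite X \<and> infinite (- X)}"

definition sub_convergent :: "nat set \<Rightarrow> (nat \<Rightarrow> rat) \<Rightarrow> bool" where
  "sub_convergent X a \<longleftrightarrow> summable (\<lambda>n. real_of_rat (a (enumerate X n)))"

definition psums :: "(nat \<Rightarrow> real) \<Rightarrow> nat \<Rightarrow> real" where
  "psums f n = (\<Sum>i<n. f i)"

definition tends_to_infinity :: "(nat \<Rightarrow> rat) \<Rightarrow> bool" where
  "tends_to_infinity a \<longleftrightarrow>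
     filterlim (psums (\<lambda>i. real_of_rat (a i))) at_top sequentially \<or>
     filterlim (psums (\<lambda>i. real_of_rat (a i))) at_bot sequentially"

definition conditional :: "(nat \<Rightarrow> rat) \<Rightarrow> bool" where
  "conditional a \<longleftrightarrow>
     filterlim (psums (\<lambda>i. max (real_of_rat (a i)) 0)) at_top sequentially \<and>
     filterlim (psums (\<lambda>i. min (real_of_rat (a i)) 0)) at_bot sequentially"

definition S_ui :: "(nat \<Rightarrow> rat) set" where
  "S_ui = {a \<in> null_seqs. tends_to_infinity a \<and> \<not> conditional a}"

definition ss_family :: "nat set set \<Rightarrow> bool" where
  "ss_family \<X> \<longleftrightarrow> \<X> \<subseteq> infcoinf \<and> (\<forall>a\<in>S_ui. \<exists>X\<in>\<X>. sub_convergent X a)"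

definition ss_dual_family :: "(nat \<Rightarrow> rat) set \<Rightarrow> bool" where
  "ss_dual_family \<A> \<longleftrightarrow> \<A> \<subseteq> S_ui \<and> \<not> (\<exists>X\<in>infcoinf. \<forall>a\<in>\<A>. sub_convergent X a)"

definition le_star :: "(nat \<Rightarrow> nat) \<Rightarrow> (nat \<Rightarrow> nat) \<Rightarrow> bool" where
  "le_star f g \<longleftrightarrow> (\<forall>\<^sub>F n in sequentially. f n \<le> g n)"

definition unbounded_family :: "(nat \<Rightarrow> nat) set \<Rightarrow> bool" where
  "unbounded_family F \<longleftrightarrow> \<not> (\<exists>g. \<forall>f\<in>F. le_star f g)"

definition dominating_family :: "(nat \<Rightarrow> nat) set \<Rightarrow> bool" where
  "dominating_family F \<longleftrightarrow> (\<forall>g. \<exists>f\<in>F. le_star g f)"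

text \<open>The least cardinality of a family satisfying P equals the least cardinality of
  a family satisfying Q (both minima exist by well-ordering of cardinals, given nonemptiness,
  which follows from the statement itself).\<close>
definition same_min_card :: "('a set \<Rightarrow> bool) \<Rightarrow> ('b set \<Rightarrow> bool) \<Rightarrow> bool" where
  "same_min_card P Q \<longleftrightarrow>
     (\<exists>A. P A) \<and> (\<exists>B. Q B) \<and>
     (\<forall>A. P A \<longrightarrow> (\<exists>B. Q B \<and> ordLeq3 (card_of B) (card_of A))) \<and>
     (\<forall>B. Q B \<longrightarrow> (\<exists>A. P A \<and> ordLeq3 (card_of A) (card_of B)))"

end

theory Submission
  imports Defs
begin

text \<open>Both equalities come from two Tukey connections between the relation
  \<open>\<Sum>\<^sub>X a converges\<close> on \<open>\<S>\<^sub>u\<^sub>i \<times> [\<omega>]\<^sup>\<omega>\<^sub>\<omega>\<close> and eventual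
  domination on \<open>\<omega>\<^sup>\<omega>\<close>.

  For \<open>g \<in> \<omega>\<^sup>\<omega>\<close> cut \<open>\<omega>\<close> into consecutive blocks, the \<open>n\<close>-th of length \<open>g(n) + 1\<close>,
  and let \<open>h\<^sub>g\<close> be \<open>1/(n+1)\<close> on the \<open>n\<close>-th block. It is positive and dominates the
  harmonic series, so \<open>h\<^sub>g \<in> \<S>\<^sub>u\<^sub>i\<close>. If \<open>g(n)\<close> exceeds the \<open>n(n+1)\<close>-th element of \<open>X\<close>,
  then the first \<open>n(n+1)+1\<close> terms of the subseries along \<open>X\<close> are all at least
  \<open>1/(n+1)\<close> and sum to more than \<open>n\<close>; so convergence along \<open>X\<close> forces
  \<open>n \<mapsto> e\<^sub>X(n(n+1))\<close> to dominate \<open>g\<close>.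

  Conversely, for a null sequence \<open>a\<close> let \<open>m\<^sub>a(n)\<close> be the least index beyond which
  \<open>|a\<^sub>i| \<le> 2\<^sup>-\<^sup>n\<close>. If a strictly increasing \<open>H\<close> dominates \<open>m\<^sub>a\<close>, the subseries along
  \<open>range H\<close> is eventually bounded by a geometric series; taking \<open>H\<close> with even values
  keeps \<open>range H\<close> coinfinite.\<close>

lemma same_min_card_if_image_transfers:
  assumes "P A\<^sub>0"
    and PQ: "\<And>A. P A \<Longrightarrow> Q (f ` A)"
    and QP: "\<And>B. Q B \<Longrightarrow> P (g ` B)"
  shows "same_min_card P Q"
  unfolding same_min_card_def
proof (intro conjI allI impI)
  show "\<exists>A. P A" "\<exists>B. Q B"
    using assms(1) PQ by blast+
  show "\<exists>B. Q B \<and> ordLeq3 (card_of B) (card_of A)" if "P A" for A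
    using PQ[OF that] card_of_image by blast
  show "\<exists>A. P A \<and> ordLeq3 (card_of A) (card_of B)" if "Q B" for B
    using QP[OF that] card_of_image by blast
qed

lemma le_star_mono_right: "le_star f g \<Longrightarrow> (\<And>n. g n \<le> h n) \<Longrightarrow> le_star f h"
  unfolding le_star_def by (erule eventually_mono) (metis order_trans)

lemma dominating_family_UNIV: "dominating_family UNIV"
  unfolding dominating_family_def le_star_def by (blast intro: always_eventually order_refl)

lemma unbounded_family_UNIV: "unbounded_family UNIV"
  unfolding unbounded_family_def
proof
  assume "\<exists>g. \<forall>f\<in>UNIV. le_star f g"
  then obtain g where "le_star (\<lambda>n. Suc (g n)) g" by blast
  then have "\<forall>\<^sub>F n in sequentially. False"
    unfolding le_star_def by (rule eventually_mono) simp
  then show False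
    by simp
qed

lemma not_conditional_if_nonneg:
  assumes "\<And>i. 0 \<le> a i"
  shows "\<not> conditional a"
proof
  assume "conditional a"
  then have "filterlim (psums (\<lambda>i. min (real_of_rat (a i)) 0)) at_bot sequentially"
    unfolding conditional_def by blast
  moreover have "psums (\<lambda>i. min (real_of_rat (a i)) 0) = (\<lambda>_. 0)"
    using assms by (auto simp: psums_def intro!: ext sum.neutral)
  ultimately have "\<forall>\<^sub>F n in sequentially. (0::real) \<le> -1"
    unfolding filterlim_at_bot by simp
  then show False by simp
qed

lemma enumerate_range_strict_mono:
  fixes H :: "nat \<Rightarrow> nat"
  assumes H: "strict_mono H"
  shows "enumerate (range H) n = H n"
proof (induction n)
  case 0
  show ?case unfolding enumerate_0
    by (rule Least_equality) (auto simp: H strict_mono_less_eq)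
next
  case (Suc n)
  have "infinite (range H)"
    using H strict_mono_imp_inj_on finite_imageD by blast
  then show ?case unfolding enumerate_Suc''[OF \<open>infinite (range H)\<close>] Suc
    by (intro Least_equality) (auto simp: strict_mono_less[OF H] strict_mono_less_eq[OF H] Suc_le_eq)
qed

text \<open>Block \<open>n\<close> is \<open>[block_end g (n - 1), block_end g n)\<close> (for \<open>n = 0\<close> it starts at \<open>0\<close>),
  with \<open>g n + 1\<close> elements.\<close>
definition block_end :: "(nat \<Rightarrow> nat) \<Rightarrow> nat \<Rightarrow> nat" where
  "block_end g n = (\<Sum>k\<le>n. g k + 1)"

definition block_index :: "(nat \<Rightarrow> nat) \<Rightarrow> nat \<Rightarrow> nat" where
  "block_index g i = (LEAST n. i < block_end g n)"

definition block_harmonic :: "(nat \<Rightarrow> nat) \<Rightarrow> nat \<Rightarrow> rat" where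
  "block_harmonic g i = 1 / (of_nat (block_index g i) + 1)"

lemma block_end_Suc: "block_end g (Suc n) = block_end g n + g (Suc n) + 1"
  by (simp add: block_end_def)

lemma block_end_ge: "g n \<le> block_end g n"
  unfolding block_end_def by (rule order_trans[of _ "g n + 1"]) (auto intro: member_le_sum)

lemma less_block_end: "n < block_end g n"
  by (induction n) (auto simp: block_end_Suc block_end_def)

lemma strict_mono_block_end: "strict_mono (block_end g)"
  by (rule strict_mono_Suc_iff[THEN iffD2]) (simp add: block_end_Suc)

lemma block_index_le: "i < block_end g n \<Longrightarrow> block_index g i \<le> n"
  unfolding block_index_def by (rule Least_le)

lemma less_block_end_block_index: "i < block_end g (block_index g i)"
  unfolding block_index_def by (rule LeastI[of _ i]) (rule less_block_end)

lemma block_index_le_self: "block_index g i \<le> i"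
  by (rule block_index_le) (rule less_block_end)

lemma block_index_at_top: "filterlim (block_index g) at_top sequentially"
  unfolding filterlim_at_top eventually_sequentially
proof (intro allI exI impI)
  fix m i
  assume "block_end g m \<le> i"
  then have "block_end g m < block_end g (block_index g i)"
    using less_block_end_block_index[of i g] by linarith
  then show "m \<le> block_index g i"
    by (simp add: strict_mono_less[OF strict_mono_block_end])
qed

lemma real_block_harmonic: "real_of_rat (block_harmonic g i) = 1 / (real (block_index g i) + 1)"
  by (simp add: block_harmonic_def of_rat_divide of_rat_add)

lemma block_harmonic_null: "block_harmonic g \<in> null_seqs"
proof -
  have "filterlim (\<lambda>i. real (block_index g i) + 1) at_top sequentially"
    by (rule filterlim_at_top_mono[OF filterlim_compose[OF filterlim_real_sequentially
          block_index_at_top[of g]]]) auto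
  then have "(\<lambda>i. inverse (real (block_index g i) + 1)) \<longlonglongrightarrow> 0"
    by (rule tendsto_inverse_0_at_top)
  then show ?thesis
    unfolding null_seqs_def by (simp add: real_block_harmonic divide_inverse)
qed

lemma block_harmonic_tends_to_infinity: "tends_to_infinity (block_harmonic g)"
  unfolding tends_to_infinity_def
proof (rule disjI1, rule filterlim_at_top_mono[OF harm_at_top], intro always_eventually allI)
  fix n
  have "harm n = (\<Sum>i<n. 1 / (real i + 1))"
    by (induction n) (auto simp: harm_Suc harm_def field_simps)
  also have "\<dots> \<le> (\<Sum>i<n. real_of_rat (block_harmonic g i))"
    unfolding real_block_harmonic using block_index_le_self
    by (intro sum_mono divide_left_mono) auto
  finally show "harm n \<le> psums (\<lambda>i. real_of_rat (block_harmonic g i)) n"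
    by (simp add: psums_def)
qed

lemma block_harmonic_in_S_ui: "block_harmonic g \<in> S_ui"
  unfolding S_ui_def
  using block_harmonic_null block_harmonic_tends_to_infinity
    not_conditional_if_nonneg[of "block_harmonic g"]
  by (auto simp: block_harmonic_def)

definition enum_sample :: "nat set \<Rightarrow> nat \<Rightarrow> nat" where
  "enum_sample X n = enumerate X (n * (n + 1))"

lemma le_star_enum_sample_if_sub_convergent:
  assumes X: "infinite X" and conv: "sub_convergent X (block_harmonic g)"
  shows "le_star g (enum_sample X)"
proof -
  let ?t = "\<lambda>j. real_of_rat (block_harmonic g (enumerate X j))"
  have partial_sums_bounded: "(\<Sum>j<N. ?t j) \<le> suminf ?t" for N
    using conv unfolding sub_convergent_def
    by (intro sum_le_suminf) (auto simp: real_block_harmonic)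
  obtain N :: nat where N: "suminf ?t < real N"
    using reals_Archimedean2 by blast
  have "g n \<le> enum_sample X n" if "N \<le> n" for n
  proof (rule ccontr)
    assume "\<not> g n \<le> enum_sample X n"
    then have sample_in_blocks: "enum_sample X n < block_end g n"
      using block_end_ge[of g n] by simp
    have "1 / (real n + 1) \<le> ?t j" if "j < n * (n + 1) + 1" for j
    proof -
      have "enumerate X j \<le> enum_sample X n"
        using that X by (simp add: enum_sample_def)
      then have "block_index g (enumerate X j) \<le> n"
        using sample_in_blocks by (intro block_index_le) simp
      then show ?thesis
        unfolding real_block_harmonic by (intro divide_left_mono) auto
    qed
    then have "(\<Sum>j<n * (n + 1) + 1. 1 / (real n + 1)) \<le> (\<Sum>j<n * (n + 1) + 1. ?t j)"
      by (intro sum_mono) auto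
    also have "\<dots> \<le> suminf ?t"
      by (rule partial_sums_bounded)
    finally have "real (n * (n + 1) + 1) / (real n + 1) \<le> suminf ?t"
      by simp
    moreover have "real n < real (n * (n + 1) + 1) / (real n + 1)"
      by (simp add: field_simps)
    ultimately show False
      using N that by linarith
  qed
  then show ?thesis
    unfolding le_star_def eventually_sequentially by blast
qed

definition null_modulus :: "(nat \<Rightarrow> rat) \<Rightarrow> nat \<Rightarrow> nat" where
  "null_modulus a n = (LEAST m. \<forall>i\<ge>m. \<bar>real_of_rat (a i)\<bar> \<le> (1/2)^n)"

lemma abs_le_if_null_modulus_le:
  assumes "a \<in> null_seqs" and "null_modulus a n \<le> i"
  shows "\<bar>real_of_rat (a i)\<bar> \<le> (1/2)^n"
proof -
  have "(\<lambda>i. real_of_rat (a i)) \<longlonglongrightarrow> 0"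
    using assms(1) unfolding null_seqs_def by simp
  then have "(\<lambda>i. \<bar>real_of_rat (a i)\<bar>) \<longlonglongrightarrow> 0"
    by (rule tendsto_rabs_zero)
  then have "\<forall>\<^sub>F i in sequentially. \<bar>real_of_rat (a i)\<bar> < (1/2)^n"
    by (rule order_tendstoD(2)) simp
  then have "\<forall>\<^sub>F i in sequentially. \<bar>real_of_rat (a i)\<bar> \<le> (1/2)^n"
    by (rule eventually_mono) simp
  then have "\<forall>i\<ge>null_modulus a n. \<bar>real_of_rat (a i)\<bar> \<le> (1/2)^n"
    unfolding null_modulus_def eventually_sequentially by (rule LeastI_ex)
  then show ?thesis
    using assms(2) by blast
qed

lemma sub_convergent_range_if_le_star_null_modulus:
  assumes a: "a \<in> null_seqs" and H: "strict_mono H" and le: "le_star (null_modulus a) H"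
  shows "sub_convergent (range H) a"
  unfolding sub_convergent_def enumerate_range_strict_mono[OF H]
proof (rule summable_comparison_test_ev)
  show "summable (\<lambda>n. (1/2::real)^n)"
    by simp
  show "\<forall>\<^sub>F n in sequentially. norm (real_of_rat (a (H n))) \<le> (1/2)^n"
    using le unfolding le_star_def
    by eventually_elim (use abs_le_if_null_modulus_le[OF a] in auto)
qed

definition even_block_ends :: "(nat \<Rightarrow> nat) \<Rightarrow> nat set" where
  "even_block_ends g = range (\<lambda>n. 2 * block_end g n)"

lemma even_block_ends_infcoinf: "even_block_ends g \<in> infcoinf"
proof -
  have "infinite (even_block_ends g)"
    unfolding even_block_ends_def
    by (rule range_inj_infinite) (use strict_mono_block_end strict_mono_eq in \<open>auto simp: inj_def\<close>)
  moreover have "range (\<lambda>k::nat. 2 * k + 1) \<subseteq> - even_block_ends g"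
    unfolding even_block_ends_def by auto presburger
  moreover have "infinite (range (\<lambda>k::nat. 2 * k + 1))"
    by (rule range_inj_infinite) (auto simp: inj_def)
  ultimately show ?thesis
    unfolding infcoinf_def using infinite_super by blast
qed

lemma sub_convergent_even_block_ends:
  assumes "a \<in> null_seqs" and "le_star (null_modulus a) g"
  shows "sub_convergent (even_block_ends g) a"
  unfolding even_block_ends_def
proof (rule sub_convergent_range_if_le_star_null_modulus[OF assms(1)])
  show "strict_mono (\<lambda>n. 2 * block_end g n)"
    using strict_mono_block_end by (auto simp: strict_mono_def)
  show "le_star (null_modulus a) (\<lambda>n. 2 * block_end g n)"
    by (rule le_star_mono_right[OF assms(2)]) (metis block_end_ge mult_2 trans_le_add1)
qed

lemma dominating_family_if_ss_family:
  assumes "ss_family \<X>"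
  shows "dominating_family (enum_sample ` \<X>)"
  unfolding dominating_family_def
proof
  fix g
  obtain X where "X \<in> \<X>" "sub_convergent X (block_harmonic g)"
    using assms block_harmonic_in_S_ui unfolding ss_family_def by blast
  moreover have "infinite X"
    using assms \<open>X \<in> \<X>\<close> unfolding ss_family_def infcoinf_def by blast
  ultimately show "\<exists>f\<in>enum_sample ` \<X>. le_star g f"
    using le_star_enum_sample_if_sub_convergent by blast
qed

lemma ss_family_if_dominating_family:
  assumes "dominating_family D"
  shows "ss_family (even_block_ends ` D)"
  unfolding ss_family_def
proof (intro conjI ballI)
  show "even_block_ends ` D \<subseteq> infcoinf"
    using even_block_ends_infcoinf by blast
  fix a assume "a \<in> S_ui"
  obtain g where "g \<in> D" "le_star (null_modulus a) g"
    using assms unfolding dominating_family_def by blast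
  with \<open>a \<in> S_ui\<close> show "\<exists>X\<in>even_block_ends ` D. sub_convergent X a"
    using sub_convergent_even_block_ends unfolding S_ui_def by blast
qed

lemma unbounded_family_if_ss_dual_family:
  assumes "ss_dual_family \<A>"
  shows "unbounded_family (null_modulus ` \<A>)"
  unfolding unbounded_family_def
proof
  assume "\<exists>g. \<forall>f\<in>null_modulus ` \<A>. le_star f g"
  then obtain g where "\<forall>a\<in>\<A>. le_star (null_modulus a) g"
    by blast
  moreover have "\<A> \<subseteq> null_seqs"
    using assms unfolding ss_dual_family_def S_ui_def by blast
  ultimately have "\<forall>a\<in>\<A>. sub_convergent (even_block_ends g) a"
    using sub_convergent_even_block_ends by blast
  then show False
    using assms even_block_ends_infcoinf unfolding ss_dual_family_def by blast
qed

lemma ss_dual_family_if_unbounded_family: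
  assumes "unbounded_family F"
  shows "ss_dual_family (block_harmonic ` F)"
  unfolding ss_dual_family_def
proof (intro conjI notI)
  show "block_harmonic ` F \<subseteq> S_ui"
    using block_harmonic_in_S_ui by blast
  assume "\<exists>X\<in>infcoinf. \<forall>a\<in>block_harmonic ` F. sub_convergent X a"
  then obtain X where "infinite X" "\<forall>g\<in>F. sub_convergent X (block_harmonic g)"
    unfolding infcoinf_def by blast
  then have "\<forall>g\<in>F. le_star g (enum_sample X)"
    using le_star_enum_sample_if_sub_convergent by blast
  then show False
    using assms unfolding unbounded_family_def by blast
qed

theorem mainTheorem15:
  shows "same_min_card ss_family dominating_family \<and>
         same_min_card ss_dual_family unbounded_family"
proof
  show "same_min_card ss_family dominating_family"
    using ss_family_if_dominating_family[OF dominating_family_UNIV]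
      dominating_family_if_ss_family ss_family_if_dominating_family
    by (rule same_min_card_if_image_transfers)
  show "same_min_card ss_dual_family unbounded_family"
    using ss_dual_family_if_unbounded_family[OF unbounded_family_UNIV]
      unbounded_family_if_ss_dual_family ss_dual_family_if_unbounded_family
    by (rule same_min_card_if_image_transfers)
qed

end
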